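(* Suppose $h$ is $L_h$-smooth (its gradient is $L_h$-Lipschitz in the Euclidean norm) and $h^*$ is twice differentiable on $\mathbb{R}^d$ with $M$-Lipschitz Hessian in the sense that $\|(\nabla^2h^*(x)-\nabla^2h^*(y))u\|\le M\|x-y\|\,\|u\|$ for all $x,y,u\in\mathbb{R}^d$. Then for all $x,y,v\in\mathbb{R}^d$ and $\lambda\in[-1,1]$, $$D_{h^*}(x+\lambda v,x)\le G(x,y,v)\,\lambda^2D_{h^*}(y+v,y),\qquad\text{with } G(x,y,v)=1+2ML_h\big(\|y-x\|+\|v\|\big).$$
   Context: $\|\cdot\|$ is the Euclidean norm. $h^*$ denotes the convex conjugate of the convex function $h$, and for differentiable $\varphi$, $D_\varphi(x,y)=\varphi(x)-\varphi(y)-\nabla\varphi(y)^\top(x-y)$. *)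

theory Defs
  imports "HOL-Analysis.Analysis"
begin

definition convex_conj :: "('a::euclidean_space \<Rightarrow> real) \<Rightarrow> 'a \<Rightarrow> real" where
  "convex_conj h y = (SUP x. y \<bullet> x - h x)"

definition bregman :: "('a::euclidean_space \<Rightarrow> real) \<Rightarrow> ('a \<Rightarrow> 'a) \<Rightarrow> 'a \<Rightarrow> 'a \<Rightarrow> real" where
  "bregman phi grad x y = phi x - phi y - grad y \<bullet> (x - y)"

end

theory Submission
  imports Defs
begin

text \<open>Smoothness of h makes its conjugate strongly convex: if z maximizes y \<bullet> x - h x, then
  gh z = y, and testing the supremum defining h*(w) at z + (w - y)/Lh with the descent lemma for h
  gives h*(w) \<ge> h*(y) + (w - y) \<bullet> z + |w - y|^2/(2 Lh). Hence z is the gradient of h* at y and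
  |v|^2/2 \<le> Lh D(y + v, y). Along the two segments,
  phi(s) = D(x + s t v, x) - t^2 D(y + s v, y) - c s^2/2 with c = t^2 M (|y - x| + 2|v|) |v|^2
  satisfies phi(0) = phi'(0) = 0 and, by the Lipschitz bound on the Hessian, phi'' \<le> 0.
  So D(x + t v, x) \<le> t^2 D(y + v, y) + c/2, and the strong convexity bound turns the factor |v|^2
  in c into a multiple of D(y + v, y).\<close>

lemma nonneg_if_lipschitz_bound:
  fixes f :: "'a::euclidean_space \<Rightarrow> 'b::real_normed_vector"
  assumes "\<And>x y. norm (f x - f y) \<le> L * norm (x - y)"
  shows "0 \<le> L"
proof -
  obtain b :: 'a where "b \<in> Basis" using nonempty_Basis by blast
  then have "norm (f b - f 0) \<le> L" using assms[of b 0] by simp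
  then show ?thesis using norm_ge_zero order_trans by blast
qed

lemma has_real_derivative_compose_line:
  fixes F :: "'a::real_normed_vector \<Rightarrow> real"
  assumes "(F has_derivative F') (at (a + s *\<^sub>R b))"
  shows "((\<lambda>s. F (a + s *\<^sub>R b)) has_real_derivative F' b) (at s)"
proof -
  have "((\<lambda>s. a + s *\<^sub>R b) has_derivative (\<lambda>s. s *\<^sub>R b)) (at s)"
    by (auto intro!: derivative_eq_intros)
  from has_derivative_compose[OF this assms]
  have "((\<lambda>s. F (a + s *\<^sub>R b)) has_derivative (\<lambda>r. r * F' b)) (at s)"
    using linear_cmul[OF has_derivative_linear[OF assms]] by simp
  then show ?thesis
    by (simp add: has_field_derivative_def mult.commute[of _ "F' b"])
qed

lemma has_real_derivative_bregman_line:
  assumes "\<And>z. (F has_derivative (\<lambda>u. g z \<bullet> u)) (at z)"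
  shows "((\<lambda>s. bregman F g (a + s *\<^sub>R b) a) has_real_derivative (g (a + s *\<^sub>R b) - g a) \<bullet> b) (at s)"
  unfolding bregman_def
  by (auto intro!: derivative_eq_intros has_real_derivative_compose_line[OF assms]
      simp: inner_diff_left)

lemma has_real_derivative_gradient_line:
  fixes g :: "'a::euclidean_space \<Rightarrow> 'a"
  assumes "\<And>z. (g has_derivative H z) (at z)"
  shows "((\<lambda>s. (g (a + s *\<^sub>R b) - g a) \<bullet> b) has_real_derivative H (a + s *\<^sub>R b) b \<bullet> b) (at s)"
proof -
  have "((\<lambda>z. (g z - g a) \<bullet> b) has_derivative (\<lambda>u. H z u \<bullet> b)) (at z)" for z
    by (auto intro!: derivative_eq_intros assms)
  then show ?thesis
    by (rule has_real_derivative_compose_line)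
qed

lemma le_first_order_if_second_derivative_nonpos:
  fixes \<phi> \<phi>' \<phi>'' :: "real \<Rightarrow> real"
  assumes "\<And>s. s \<in> {0..1} \<Longrightarrow> (\<phi> has_real_derivative \<phi>' s) (at s)"
    and "\<And>s. s \<in> {0..1} \<Longrightarrow> (\<phi>' has_real_derivative \<phi>'' s) (at s)"
    and "\<And>s. s \<in> {0..1} \<Longrightarrow> \<phi>'' s \<le> 0"
  shows "\<phi> 1 \<le> \<phi> 0 + \<phi>' 0"
proof -
  have "\<phi>' s \<le> \<phi>' 0" if "s \<in> {0..1}" for s
    using that assms(2,3) by (intro DERIV_nonpos_imp_nonincreasing[of 0 s \<phi>']) force+
  moreover have "((\<lambda>s. \<phi> s - s * \<phi>' 0) has_real_derivative \<phi>' s - \<phi>' 0) (at s)"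
    if "s \<in> {0..1}" for s
    using assms(1)[OF that] by (auto intro!: derivative_eq_intros)
  ultimately have "(\<lambda>s. \<phi> s - s * \<phi>' 0) 1 \<le> (\<lambda>s. \<phi> s - s * \<phi>' 0) 0"
    by (intro DERIV_nonpos_imp_nonincreasing[of 0 1]) force+
  then show ?thesis by simp
qed

lemma bregman_line_le_hessian_lipschitz:
  fixes F :: "'a::euclidean_space \<Rightarrow> real"
  assumes grad: "\<And>z. (F has_derivative (\<lambda>u. g z \<bullet> u)) (at z)"
    and hess: "\<And>z. (g has_derivative H z) (at z)"
    and hess_lip: "\<And>x y u. norm (H x u - H y u) \<le> M * norm (x - y) * norm u"
    and "0 \<le> M" and "\<bar>t\<bar> \<le> 1"
  shows "bregman F g (x + t *\<^sub>R v) x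
    \<le> t\<^sup>2 * (bregman F g (y + v) y + M * (norm (y - x) + 2 * norm v) * (norm v)\<^sup>2 / 2)"
proof -
  define w where "w = t *\<^sub>R v"
  define c where "c = t\<^sup>2 * M * (norm (y - x) + 2 * norm v) * (norm v)\<^sup>2"
  define \<phi> where "\<phi> s = bregman F g (x + s *\<^sub>R w) x - t\<^sup>2 * bregman F g (y + s *\<^sub>R v) y
    - c / 2 * s\<^sup>2" for s
  define \<phi>' where "\<phi>' s = (g (x + s *\<^sub>R w) - g x) \<bullet> w - t\<^sup>2 * ((g (y + s *\<^sub>R v) - g y) \<bullet> v)
    - c * s" for s
  define \<phi>'' where "\<phi>'' s = H (x + s *\<^sub>R w) w \<bullet> w - t\<^sup>2 * (H (y + s *\<^sub>R v) v \<bullet> v) - c" for s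
  have "(\<phi> has_real_derivative \<phi>' s) (at s)" for s
    unfolding \<phi>_def \<phi>'_def
    by (auto intro!: derivative_eq_intros has_real_derivative_bregman_line[OF grad])
  moreover have "(\<phi>' has_real_derivative \<phi>'' s) (at s)" for s
    unfolding \<phi>'_def \<phi>''_def
    by (auto intro!: derivative_eq_intros has_real_derivative_gradient_line[OF hess])
  moreover have "\<phi>'' s \<le> 0" if s: "s \<in> {0..1}" for s
  proof -
    let ?a = "x + s *\<^sub>R w" and ?b = "y + s *\<^sub>R v"
    have "\<bar>s * (t - 1)\<bar> \<le> 1 * 2"
      unfolding abs_mult using s \<open>\<bar>t\<bar> \<le> 1\<close> by (intro mult_mono) auto
    then have "\<bar>s * (t - 1)\<bar> * norm v \<le> 2 * norm v"
      by (simp add: mult_right_mono)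
    moreover have "?a - ?b = (x - y) + (s * (t - 1)) *\<^sub>R v"
      by (simp add: w_def algebra_simps)
    ultimately have "norm (?a - ?b) \<le> norm (y - x) + 2 * norm v"
      by (metis add_left_mono norm_minus_commute norm_scaleR norm_triangle_le)
    have "(H ?a v - H ?b v) \<bullet> v \<le> norm (H ?a v - H ?b v) * norm v"
      by (rule norm_cauchy_schwarz)
    also have "\<dots> \<le> M * norm (?a - ?b) * norm v * norm v"
      by (rule mult_right_mono[OF hess_lip]) simp
    also have "\<dots> = M * norm (?a - ?b) * (norm v)\<^sup>2"
      by (simp add: power2_eq_square)
    also have "\<dots> \<le> M * (norm (y - x) + 2 * norm v) * (norm v)\<^sup>2"
      using \<open>norm (?a - ?b) \<le> _\<close> \<open>0 \<le> M\<close> by (intro mult_right_mono mult_left_mono) auto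
    finally have "t\<^sup>2 * ((H ?a v - H ?b v) \<bullet> v) \<le> c"
      unfolding c_def by (simp add: mult.assoc mult_left_mono)
    moreover have "H ?a w \<bullet> w = t\<^sup>2 * (H ?a v \<bullet> v)"
      using linear_cmul[OF has_derivative_linear[OF hess]]
      by (simp add: w_def power2_eq_square)
    ultimately show ?thesis
      by (simp add: \<phi>''_def inner_diff_left algebra_simps)
  qed
  ultimately have "\<phi> 1 \<le> \<phi> 0 + \<phi>' 0"
    by (rule le_first_order_if_second_derivative_nonpos)
  then show ?thesis
    by (simp add: \<phi>_def \<phi>'_def c_def w_def bregman_def algebra_simps)
qed

lemma le_convex_conj:
  assumes "bdd_above (range (\<lambda>x. w \<bullet> x - h x))"
  shows "w \<bullet> x - h x \<le> convex_conj h w"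
  unfolding convex_conj_def by (rule cSUP_upper[OF UNIV_I assms])

lemma bounded_superlevel_conj:
  fixes h :: "'a::euclidean_space \<Rightarrow> real"
  assumes finite: "\<And>w. bdd_above (range (\<lambda>x. w \<bullet> x - h x))"
  shows "bounded {x. c \<le> y \<bullet> x - h x}"
proof -
  define K where "K = (\<Sum>i\<in>Basis. \<bar>convex_conj h (y + i)\<bar> + \<bar>convex_conj h (y - i)\<bar> - c)"
  have "norm x \<le> K" if x: "c \<le> y \<bullet> x - h x" for x
  proof -
    have "\<bar>x \<bullet> i\<bar> \<le> \<bar>convex_conj h (y + i)\<bar> + \<bar>convex_conj h (y - i)\<bar> - c" for i
    proof -
      have "(y + i) \<bullet> x - h x \<le> convex_conj h (y + i)" "(y - i) \<bullet> x - h x \<le> convex_conj h (y - i)"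
        using le_convex_conj[OF finite] by blast+
      moreover have "(y + i) \<bullet> x = y \<bullet> x + x \<bullet> i" "(y - i) \<bullet> x = y \<bullet> x - x \<bullet> i"
        by (simp_all add: inner_add_left inner_diff_left inner_commute[of i x])
      ultimately show ?thesis
        using x abs_ge_self[of "convex_conj h (y + i)"] abs_ge_self[of "convex_conj h (y - i)"]
          abs_ge_zero[of "convex_conj h (y + i)"] abs_ge_zero[of "convex_conj h (y - i)"]
        unfolding abs_le_iff by linarith
    qed
    then have "(\<Sum>i\<in>Basis. \<bar>x \<bullet> i\<bar>) \<le> K"
      unfolding K_def by (rule sum_mono)
    then show ?thesis using norm_le_l1[of x] by linarith
  qed
  then show ?thesis unfolding bounded_iff by blast
qed

lemma convex_conj_attained:
  fixes h :: "'a::euclidean_space \<Rightarrow> real"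
  assumes "continuous_on UNIV h"
    and "\<And>w. bdd_above (range (\<lambda>x. w \<bullet> x - h x))"
  obtains z where "\<And>x. y \<bullet> x - h x \<le> y \<bullet> z - h z"
proof -
  define S where "S = {x. - h 0 \<le> y \<bullet> x - h x}"
  have cont: "continuous_on UNIV (\<lambda>x. y \<bullet> x - h x)"
    by (intro continuous_intros assms(1))
  have "compact S"
    unfolding S_def compact_eq_bounded_closed
    using bounded_superlevel_conj[OF assms(2)] closed_Collect_le[OF continuous_on_const cont]
    by blast
  moreover have "0 \<in> S" unfolding S_def by simp
  ultimately obtain z where z: "z \<in> S" "\<And>x. x \<in> S \<Longrightarrow> y \<bullet> x - h x \<le> y \<bullet> z - h z"
    using continuous_attains_sup[of S "\<lambda>x. y \<bullet> x - h x"] continuous_on_subset[OF cont] by blast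
  have "y \<bullet> x - h x \<le> y \<bullet> z - h z" for x
    using z by (cases "x \<in> S") (auto simp: S_def)
  then show ?thesis by (rule that)
qed

lemma lipschitz_gradient_upper_bound:
  fixes h :: "'a::euclidean_space \<Rightarrow> real"
  assumes grad: "\<And>x. (h has_derivative (\<lambda>u. gh x \<bullet> u)) (at x)"
    and lip: "\<And>x y. norm (gh x - gh y) \<le> L * norm (x - y)"
  shows "h (z + d) \<le> h z + gh z \<bullet> d + L / 2 * (norm d)\<^sup>2"
proof -
  define \<phi> where "\<phi> s = h (z + s *\<^sub>R d) - s * (gh z \<bullet> d) - L / 2 * s\<^sup>2 * (norm d)\<^sup>2" for s
  have "\<phi> 1 \<le> \<phi> 0"
  proof (rule DERIV_nonpos_imp_nonincreasing[of 0 1 \<phi>])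
    fix s :: real assume s: "0 \<le> s" "s \<le> 1"
    have "(gh (z + s *\<^sub>R d) - gh z) \<bullet> d \<le> norm (gh (z + s *\<^sub>R d) - gh z) * norm d"
      by (rule norm_cauchy_schwarz)
    also have "\<dots> \<le> L * norm (s *\<^sub>R d) * norm d"
      using lip[of "z + s *\<^sub>R d" z] by (simp add: mult_right_mono)
    also have "\<dots> = L * s * (norm d)\<^sup>2"
      using s by (simp add: power2_eq_square)
    finally have "(gh (z + s *\<^sub>R d) - gh z) \<bullet> d \<le> L * s * (norm d)\<^sup>2" .
    moreover have "(\<phi> has_real_derivative (gh (z + s *\<^sub>R d) - gh z) \<bullet> d - L * s * (norm d)\<^sup>2) (at s)"
      unfolding \<phi>_def
      by (auto intro!: derivative_eq_intros has_real_derivative_compose_line[OF grad]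
          simp: inner_diff_left)
    ultimately show "\<exists>y. (\<phi> has_real_derivative y) (at s) \<and> y \<le> 0"
      by auto
  qed simp
  then show ?thesis unfolding \<phi>_def by simp
qed

lemma convex_conj_quadratic_minorant:
  fixes h :: "'a::euclidean_space \<Rightarrow> real"
  assumes grad: "\<And>x. (h has_derivative (\<lambda>u. gh x \<bullet> u)) (at x)"
    and lip: "\<And>x y. norm (gh x - gh y) \<le> L * norm (x - y)"
    and "0 < L"
    and finite: "\<And>w. bdd_above (range (\<lambda>x. w \<bullet> x - h x))"
  obtains z where
    "\<And>w. convex_conj h y + (w - y) \<bullet> z + (norm (w - y))\<^sup>2 / (2 * L) \<le> convex_conj h w"
proof -
  have "continuous_on UNIV h"
    using grad has_derivative_continuous continuous_at_imp_continuous_on by blast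
  then obtain z where max: "\<And>x. y \<bullet> x - h x \<le> y \<bullet> z - h z"
    using convex_conj_attained[OF _ finite] by blast
  have "((\<lambda>x. y \<bullet> x - h x) has_derivative (\<lambda>u. y \<bullet> u - gh z \<bullet> u)) (at z)"
    by (auto intro!: derivative_eq_intros grad)
  then have "(\<lambda>u. y \<bullet> u - gh z \<bullet> u) = (\<lambda>u. 0)"
    by (rule differential_zero_maxmin[of z UNIV, rotated 2]) (auto intro: max)
  then have "(y - gh z) \<bullet> (y - gh z) = 0"
    by (metis inner_diff_left)
  then have gz: "gh z = y" by simp
  have cy: "convex_conj h y = y \<bullet> z - h z"
    using max le_convex_conj[OF finite] unfolding convex_conj_def
    by (intro antisym cSUP_least) auto
  have "convex_conj h y + (w - y) \<bullet> z + (norm (w - y))\<^sup>2 / (2 * L) \<le> convex_conj h w" for w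
  proof -
    \<comment> \<open>This step maximizes the lower bound on the supremum given by the descent bound.\<close>
    define d where "d = (1 / L) *\<^sub>R (w - y)"
    have "h (z + d) \<le> h z + y \<bullet> d + L / 2 * (norm d)\<^sup>2"
      using lipschitz_gradient_upper_bound[OF grad lip, of z d] gz by simp
    moreover have "w \<bullet> (z + d) - h (z + d) \<le> convex_conj h w"
      by (rule le_convex_conj[OF finite])
    moreover have "(w - y) \<bullet> d = (norm (w - y))\<^sup>2 / L"
      by (simp add: d_def power2_norm_eq_inner)
    moreover have "L / 2 * (norm d)\<^sup>2 = (norm (w - y))\<^sup>2 / (2 * L)"
      using \<open>0 < L\<close> by (simp add: d_def power_divide power2_eq_square)
    moreover have "w \<bullet> (z + d) - y \<bullet> d = (w - y) \<bullet> z + (w - y) \<bullet> d + y \<bullet> z"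
      by (simp add: inner_add_right inner_diff_left inner_diff_right inner_commute)
    ultimately show ?thesis
      using cy by (simp add: field_simps)
  qed
  then show ?thesis by (rule that)
qed

lemma gradient_eq_of_affine_minorant:
  fixes F :: "'a::real_inner \<Rightarrow> real"
  assumes "(F has_derivative (\<lambda>u. g \<bullet> u)) (at y)"
    and "\<And>w. F y + (w - y) \<bullet> z \<le> F w"
  shows "g = z"
proof -
  have "((\<lambda>w. F w - w \<bullet> z) has_derivative (\<lambda>u. g \<bullet> u - u \<bullet> z)) (at y)"
    by (auto intro!: derivative_eq_intros assms(1))
  moreover have "F y - y \<bullet> z \<le> F w - w \<bullet> z" for w
    using assms(2)[of w] by (simp add: inner_diff_left)
  ultimately have "(\<lambda>u. g \<bullet> u - u \<bullet> z) = (\<lambda>u. 0)"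
    by (intro differential_zero_maxmin[of y UNIV]) auto
  then have "(g - z) \<bullet> (g - z) = 0"
    by (metis inner_commute inner_diff_left)
  then show ?thesis by simp
qed

lemma bregman_convex_conj_lower_bound:
  fixes h :: "'a::euclidean_space \<Rightarrow> real"
  assumes grad: "\<And>x. (h has_derivative (\<lambda>u. gh x \<bullet> u)) (at x)"
    and lip: "\<And>x y. norm (gh x - gh y) \<le> L * norm (x - y)"
    and "0 < L"
    and finite: "\<And>w. bdd_above (range (\<lambda>x. w \<bullet> x - h x))"
    and conj_grad: "\<And>x. (convex_conj h has_derivative (\<lambda>u. gs x \<bullet> u)) (at x)"
  shows "(norm v)\<^sup>2 / (2 * L) \<le> bregman (convex_conj h) gs (y + v) y"
proof -
  obtain z where z:
    "\<And>w. convex_conj h y + (w - y) \<bullet> z + (norm (w - y))\<^sup>2 / (2 * L) \<le> convex_conj h w"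
    using convex_conj_quadratic_minorant[OF grad lip \<open>0 < L\<close> finite] by blast
  have "convex_conj h y + (w - y) \<bullet> z \<le> convex_conj h w" for w
    using z[of w] \<open>0 < L\<close> by (smt (verit) divide_nonneg_pos zero_le_power2)
  then have "gs y = z"
    by (rule gradient_eq_of_affine_minorant[OF conj_grad])
  then show ?thesis
    using z[of "y + v"] by (simp add: bregman_def inner_commute)
qed

lemma half_sq_norm_le_bregman_convex_conj:
  fixes h :: "'a::euclidean_space \<Rightarrow> real"
  assumes grad: "\<And>x. (h has_derivative (\<lambda>u. gh x \<bullet> u)) (at x)"
    and lip: "\<And>x y. norm (gh x - gh y) \<le> L * norm (x - y)"
    and finite: "\<And>w. bdd_above (range (\<lambda>x. w \<bullet> x - h x))"
    and conj_grad: "\<And>x. (convex_conj h has_derivative (\<lambda>u. gs x \<bullet> u)) (at x)"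
  shows "(norm v)\<^sup>2 / 2 \<le> L * bregman (convex_conj h) gs (y + v) y"
proof -
  define D where "D = bregman (convex_conj h) gs (y + v) y"
  have "0 \<le> L" by (rule nonneg_if_lipschitz_bound[OF lip])
  \<comment> \<open>The lower bound above needs L > 0, so approach L from above.\<close>
  have bound: "(norm v)\<^sup>2 / 2 \<le> (L + e) * D" if "0 < e" for e
  proof -
    have "norm (gh x - gh y) \<le> (L + e) * norm (x - y)" for x y
      using lip[of x y] that by (smt (verit) mult_right_mono norm_ge_zero)
    from bregman_convex_conj_lower_bound[OF grad this _ finite conj_grad]
    show ?thesis using \<open>0 \<le> L\<close> that by (simp add: D_def field_simps)
  qed
  have "\<forall>\<^sub>F e in at_right 0. (norm v)\<^sup>2 / 2 \<le> (L + e) * D"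
    using eventually_at_right_less[of 0] by (rule eventually_mono) (rule bound)
  moreover have "((\<lambda>e. (L + e) * D) \<longlongrightarrow> L * D) (at_right 0)"
    by (auto intro!: tendsto_eq_intros)
  ultimately show ?thesis
    unfolding D_def by (intro tendsto_lowerbound) auto
qed

theorem proposition1:
  fixes h :: "'a::euclidean_space \<Rightarrow> real"
    and gh :: "'a \<Rightarrow> 'a" and Lh :: real
    and gs :: "'a \<Rightarrow> 'a" and Hs :: "'a \<Rightarrow> 'a \<Rightarrow> 'a" and M :: real
  assumes h_convex: "convex_on UNIV h"
    and h_grad: "\<And>x. (h has_derivative (\<lambda>u. gh x \<bullet> u)) (at x)"
    and h_smooth: "\<And>x y. norm (gh x - gh y) \<le> Lh * norm (x - y)"
    and conj_finite: "\<And>y. bdd_above (range (\<lambda>x. y \<bullet> x - h x))"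
    and conj_grad: "\<And>x. (convex_conj h has_derivative (\<lambda>u. gs x \<bullet> u)) (at x)"
    and conj_hess: "\<And>x. (gs has_derivative Hs x) (at x)"
    and hess_lip: "\<And>x y u. norm (Hs x u - Hs y u) \<le> M * norm (x - y) * norm u"
  shows "\<forall>x y v. \<forall>t\<in>{-1..1::real}.
    bregman (convex_conj h) gs (x + t *\<^sub>R v) x
      \<le> (1 + 2 * M * Lh * (norm (y - x) + norm v)) * t\<^sup>2 * bregman (convex_conj h) gs (y + v) y"
proof (intro allI ballI)
  fix x y v :: 'a and t :: real
  assume "t \<in> {-1..1}"
  define D where "D = bregman (convex_conj h) gs (y + v) y"
  obtain b :: 'a where "b \<in> Basis" using nonempty_Basis by blast
  then have "0 \<le> M * norm b"
    using hess_lip[where u = b]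
    by (intro nonneg_if_lipschitz_bound[of "\<lambda>x. Hs x b" "M * norm b"]) (simp only: mult_ac)
  then have "0 \<le> M" using \<open>b \<in> Basis\<close> by simp
  have strong: "(norm v)\<^sup>2 / 2 \<le> Lh * D"
    unfolding D_def by (rule half_sq_norm_le_bregman_convex_conj[OF h_grad h_smooth conj_finite conj_grad])
  have "M * (norm (y - x) + 2 * norm v) * ((norm v)\<^sup>2 / 2)
      \<le> (2 * M * (norm (y - x) + norm v)) * (Lh * D)"
  proof (rule mult_mono)
    show "M * (norm (y - x) + 2 * norm v) \<le> 2 * M * (norm (y - x) + norm v)"
      using \<open>0 \<le> M\<close> by (simp add: mult_left_mono algebra_simps)
  qed (use strong \<open>0 \<le> M\<close> in auto)
  then have "D + M * (norm (y - x) + 2 * norm v) * (norm v)\<^sup>2 / 2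
      \<le> (1 + 2 * M * Lh * (norm (y - x) + norm v)) * D"
    by (simp add: algebra_simps)
  moreover have "bregman (convex_conj h) gs (x + t *\<^sub>R v) x
      \<le> t\<^sup>2 * (D + M * (norm (y - x) + 2 * norm v) * (norm v)\<^sup>2 / 2)"
    unfolding D_def using \<open>0 \<le> M\<close> \<open>t \<in> {-1..1}\<close>
    by (intro bregman_line_le_hessian_lipschitz[OF conj_grad conj_hess hess_lip]) auto
  ultimately show "bregman (convex_conj h) gs (x + t *\<^sub>R v) x
      \<le> (1 + 2 * M * Lh * (norm (y - x) + norm v)) * t\<^sup>2 * D"
    by (smt (verit) mult.assoc mult.commute mult_left_mono zero_le_power2)
qed

end
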